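(* Let $K_{\hat\vartheta}=\sup_{x\in\mathbb{R}}|F_{\hat\vartheta}(x)-F_\vartheta(x)|$ with $\hat\vartheta=(\hat\mu,\hat\sigma)$. Then the distribution of $K_{\hat\vartheta}$ under $P_\vartheta$ does not depend on $\vartheta$ and $$K_{\hat\vartheta}\overset{d}{=}\max\{U,V\},$$ where $U=1-\exp\{-S\}$ and $$V=|1-T|\exp\Big\{\frac{S-T\ln(T)}{T-1}\Big\}\big(\mathbb{1}_{\{T<1\}}+\mathbb{1}_{\{S<\ln(T)\}}\big),$$ with $S$ exponentially distributed with mean $1/n$ (i.e. $S\sim F_{(0,1/n)}$) and $T\sim\Gamma(m-1,1/m)$ independent. Consequently, for $p\in(0,1)$ and $d_p=d_p(m,n)$ the $(1-p)$-quantile of $K_{\hat\vartheta}$, the set $$B_4=\{(x,y)\in\mathbb{R}^2:\ |F_{\hat\vartheta}(x)-y|\le d_p\}$$ is a confidence band for $F_\vartheta$ with exact confidence level $1-p$.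
   Context: Let $1<m\le n$ be integers and $(R_1,\dots,R_m)\in\mathbb{N}_0^m$ with $\sum_{j=1}^mR_j=n-m$; set $\gamma_j=\sum_{i=j}^m(R_i+1)$. A sample of progressively type-II censored order statistics $X=(X_{1:m:n},\dots,X_{m:m:n})$ from an absolutely continuous cdf $F$ with density $f$ has joint density $\prod_{j=1}^m\gamma_jf(x_j)[1-F(x_j)]^{R_j}$ on $x_1\le\dots\le x_m$. Here $F=F_\vartheta$ belongs to the exponential location-scale family: for $\vartheta=(\mu,\sigma)\in\Theta=\mathbb{R}\times(0,\infty)$, $F_\vartheta(x)=1-\exp\{-(x-\mu)/\sigma\}$ for $x>\mu$ and $F_\vartheta(x)=0$ for $x\le\mu$; $\vartheta$ is unknown and $P_\vartheta$ denotes the underlying probability. The MLEs are $\hat\mu=X_{1:m:n}$ and $\hat\sigma=\frac1m\sum_{j=2}^m\gamma_j(X_{j:m:n}-X_{j-1:m:n})$. $\Gamma(a,b)$ is the gamma distribution with shape $a$ and scale $b$. $\mathrm{graph}\,F=\{(t,F(t)):t\in\mathbb{R}\}$. A confidence band is a random subset $B$ of $\mathbb{R}^2$ such that $\{\mathrm{graph}\,F_\vartheta\subseteq B\}$ is measurable and the vertical sections $\{y:(t,y)\in B\}$ are a.s. intervals; it has exact confidence level $1-p$ if $P_\vartheta(\mathrm{graph}\,F_\vartheta\subseteq B)=1-p$ for all $\vartheta\in\Theta$. *)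

theory Defs
  imports "HOL-Probability.Probability"
begin

definition F_exp :: "real \<Rightarrow> real \<Rightarrow> real \<Rightarrow> real" where
  "F_exp \<mu> \<sigma> x = (if x \<le> \<mu> then 0 else 1 - exp (- (x - \<mu>) / \<sigma>))"

definition f_exp :: "real \<Rightarrow> real \<Rightarrow> real \<Rightarrow> real" where
  "f_exp \<mu> \<sigma> x = (if x \<le> \<mu> then 0 else exp (- (x - \<mu>) / \<sigma>) / \<sigma>)"

definition pc_gamma :: "nat \<Rightarrow> (nat \<Rightarrow> nat) \<Rightarrow> nat \<Rightarrow> real" where
  "pc_gamma m R j = (\<Sum>i=j..m. real (R i + 1))"

definition pc_density :: "nat \<Rightarrow> (nat \<Rightarrow> nat) \<Rightarrow> real \<Rightarrow> real \<Rightarrow> (nat \<Rightarrow> real) \<Rightarrow> real" where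
  "pc_density m R \<mu> \<sigma> x =
     (if (\<forall>j\<in>{1..<m}. x j \<le> x (Suc j))
      then (\<Prod>j=1..m. pc_gamma m R j * f_exp \<mu> \<sigma> (x j) * (1 - F_exp \<mu> \<sigma> (x j)) ^ R j)
      else 0)"

text \<open>The law P_theta of the progressively type-II censored sample, as a measure on R^{1..m}.\<close>
definition pc_sample :: "nat \<Rightarrow> (nat \<Rightarrow> nat) \<Rightarrow> real \<Rightarrow> real \<Rightarrow> (nat \<Rightarrow> real) measure" where
  "pc_sample m R \<mu> \<sigma> =
     density (PiM {1..m} (\<lambda>_. lborel)) (\<lambda>x. ennreal (pc_density m R \<mu> \<sigma> x))"

definition mu_hat :: "(nat \<Rightarrow> real) \<Rightarrow> real" where
  "mu_hat x = x 1"

definition sigma_hat :: "nat \<Rightarrow> (nat \<Rightarrow> nat) \<Rightarrow> (nat \<Rightarrow> real) \<Rightarrow> real" where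
  "sigma_hat m R x = (1 / real m) * (\<Sum>j=2..m. pc_gamma m R j * (x j - x (j - 1)))"

definition K_stat :: "nat \<Rightarrow> (nat \<Rightarrow> nat) \<Rightarrow> real \<Rightarrow> real \<Rightarrow> (nat \<Rightarrow> real) \<Rightarrow> real" where
  "K_stat m R \<mu> \<sigma> x =
     (SUP t. \<bar>F_exp (mu_hat x) (sigma_hat m R x) t - F_exp \<mu> \<sigma> t\<bar>)"

definition U_fun :: "real \<Rightarrow> real" where
  "U_fun s = 1 - exp (- s)"

definition V_fun :: "real \<Rightarrow> real \<Rightarrow> real" where
  "V_fun s t = \<bar>1 - t\<bar> * exp ((s - t * ln t) / (t - 1)) *
               (of_bool (t < 1) + of_bool (s < ln t))"

text \<open>Joint law of independent S ~ Exp(mean 1/n) and T ~ Gamma(shape m-1, scale 1/m)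
  (= Erlang with shape m-1 and rate m).\<close>
definition ST_law :: "nat \<Rightarrow> nat \<Rightarrow> (real \<times> real) measure" where
  "ST_law m n = density lborel (exponential_density (real n)) \<Otimes>\<^sub>M
                density lborel (erlang_density (m - 2) (real m))"

definition maxUV_law :: "nat \<Rightarrow> nat \<Rightarrow> real measure" where
  "maxUV_law m n = distr (ST_law m n) borel (\<lambda>(s, t). max (U_fun s) (V_fun s t))"

definition quantile :: "real measure \<Rightarrow> real \<Rightarrow> real" where
  "quantile M q = Inf {d. cdf M d \<ge> q}"

definition fgraph :: "(real \<Rightarrow> real) \<Rightarrow> (real \<times> real) set" where
  "fgraph F = {(t, F t) | t. True}"

definition exact_conf_band ::
  "(real \<Rightarrow> real \<Rightarrow> 'a measure) \<Rightarrow> (real \<Rightarrow> real \<Rightarrow> real \<Rightarrow> real)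
   \<Rightarrow> ('a \<Rightarrow> (real \<times> real) set) \<Rightarrow> real \<Rightarrow> bool" where
  "exact_conf_band P F B lvl \<longleftrightarrow>
     (\<forall>\<mu> \<sigma>. \<sigma> > 0 \<longrightarrow>
        {x \<in> space (P \<mu> \<sigma>). fgraph (F \<mu> \<sigma>) \<subseteq> B x} \<in> sets (P \<mu> \<sigma>) \<and>
        (AE x in P \<mu> \<sigma>. \<forall>t. is_interval {y. (t, y) \<in> B x}) \<and>
        measure (P \<mu> \<sigma>) {x \<in> space (P \<mu> \<sigma>). fgraph (F \<mu> \<sigma>) \<subseteq> B x} = lvl)"

definition band4 :: "nat \<Rightarrow> (nat \<Rightarrow> nat) \<Rightarrow> real \<Rightarrow> (nat \<Rightarrow> real) \<Rightarrow> (real \<times> real) set" where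
  "band4 m R d x = {(t, y). \<bar>F_exp (mu_hat x) (sigma_hat m R x) t - y\<bar> \<le> d}"

end

theory Submission
  imports Defs
begin

text \<open>The normalized spacings Z_j = \<gamma>_j (X_j - X_(j-1)) / \<sigma> (with X_0 = \<mu>) of a progressively
  censored exponential sample are i.i.d. standard exponential: integrating out the last
  observation merges its removals into the previous stage, by memorylessness. Hence
  S = (X_1 - \<mu>) / \<sigma> = Z_1 / n and T = \<sigma>_hat / \<sigma> = (Z_2 + ... + Z_m) / m are independent with
  the stated laws. The substitution t = \<mu> + \<sigma> u turns K into sup_u |F_(S,T)(u) - F_(0,1)(u)|,
  a function of (S,T) alone; on u \<le> S the gap is at most U (attained at u = S), and beyond S
  convexity of exp bounds it by max{U,V}, V being its value at the unique interior critical
  point. Finally max{U,V} has no atoms, so its (1-p)-quantile d_p has cdf exactly 1-p, and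
  the graph of F_\<theta> lies in B_4 precisely when K \<le> d_p.\<close>

section \<open>The exponential distribution function\<close>

lemma F_exp_eq_max: "F_exp a b u = 1 - exp ((max u a - a) * (- 1 / b))"
  by (simp add: F_exp_def max_def) (metis minus_diff_eq minus_divide_left)

lemma isCont_F_exp: "isCont (F_exp a b) u"
  unfolding F_exp_eq_max[abs_def] by (intro continuous_intros)

lemma F_exp_nonneg: "0 \<le> b \<Longrightarrow> 0 \<le> F_exp a b u"
  by (auto simp: F_exp_def divide_nonpos_nonneg)

lemma F_exp_le_one: "F_exp a b u \<le> 1"
  by (simp add: F_exp_def)

lemma f_exp_nonneg: "0 \<le> \<sigma> \<Longrightarrow> 0 \<le> f_exp \<mu> \<sigma> y"
  by (simp add: f_exp_def)

lemma F_exp_affine: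
  assumes "0 < \<sigma>"
  shows "F_exp a b t = F_exp ((a - \<mu>) / \<sigma>) (b / \<sigma>) ((t - \<mu>) / \<sigma>)"
proof -
  have "max ((t - \<mu>) / \<sigma>) ((a - \<mu>) / \<sigma>) - (a - \<mu>) / \<sigma> = (max t a - a) / \<sigma>"
    using assms by (auto simp: max_def divide_right_mono field_simps)
  moreover have "(max t a - a) / \<sigma> * (- 1 / (b / \<sigma>)) = (max t a - a) * (- 1 / b)"
    using assms by (cases "b = 0") (auto simp: field_simps)
  ultimately show ?thesis
    unfolding F_exp_eq_max using assms by simp
qed

lemma one_minus_F_exp_power:
  assumes "\<mu> \<le> z"
  shows "(1 - F_exp \<mu> \<sigma> z) ^ k = exp (- (real k * (z - \<mu>) / \<sigma>))"
proof (cases "z = \<mu>")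
  case False
  with assms have "(1 - F_exp \<mu> \<sigma> z) ^ k = exp (- (z - \<mu>) / \<sigma>) ^ k"
    by (simp add: F_exp_def)
  also have "\<dots> = exp (- (real k * (z - \<mu>) / \<sigma>))"
    by (simp flip: exp_of_nat_mult add: minus_divide_left algebra_simps)
  finally show ?thesis .
qed (simp add: F_exp_def)

section \<open>Normalized spacings\<close>

lemma measurable_pc_coordinate:
  "j \<in> {1..m} \<Longrightarrow> (\<lambda>x. x j :: real) \<in> borel_measurable (PiM {1..m} (\<lambda>_. lborel))"
  by (metis measurable_component_singleton measurable_lborel1)

lemma pred_pc_ordered[measurable]:
  "Measurable.pred (PiM {1..m} (\<lambda>_. lborel)) (\<lambda>x::nat \<Rightarrow> real. \<forall>j\<in>{1..<m}. x j \<le> x (Suc j))"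
proof (intro pred_intros_finite, simp)
  fix j assume "j \<in> {1..<m}"
  then have "(\<lambda>x. x j) \<in> borel_measurable (PiM {1..m} (\<lambda>_. lborel))"
    "(\<lambda>x. x (Suc j)) \<in> borel_measurable (PiM {1..m} (\<lambda>_. lborel))"
    by (auto intro!: measurable_pc_coordinate)
  then show "Measurable.pred (PiM {1..m} (\<lambda>_. lborel)) (\<lambda>x::nat \<Rightarrow> real. x j \<le> x (Suc j))"
    unfolding pred_def by (rule borel_measurable_le)
qed

lemma measurable_pc_density[measurable]:
  "pc_density m R \<mu> \<sigma> \<in> borel_measurable (PiM {1..m} (\<lambda>_. lborel))"
  unfolding pc_density_def[abs_def] F_exp_def f_exp_def by measurable

lemma pc_gamma_nonneg: "0 \<le> pc_gamma m R j"
  unfolding pc_gamma_def by (simp add: sum_nonneg)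

lemma pc_gamma_self: "pc_gamma m R m = real (R m + 1)"
  unfolding pc_gamma_def by simp

lemma pc_gamma_one:
  assumes "1 \<le> m" "m \<le> n" "(\<Sum>j=1..m. R j) = n - m"
  shows "pc_gamma m R 1 = real n"
proof -
  have "(\<Sum>i=1..m. R i + 1) = n"
    using assms by (subst sum.distrib) simp
  then have "real (\<Sum>i=1..m. R i + 1) = real n"
    by simp
  then show ?thesis
    unfolding pc_gamma_def of_nat_sum by simp
qed

lemma pc_gamma_merge_last:
  assumes "1 \<le> j" "j \<le> m"
  shows "pc_gamma m (R(m := R m + R (Suc m) + 1)) j = pc_gamma (Suc m) R j"
proof -
  have "pc_gamma m (R(m := R m + R (Suc m) + 1)) j
      = (\<Sum>i=j..<m. real (R i + 1)) + real (R m + R (Suc m) + 2)"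
    unfolding pc_gamma_def using assms
    by (simp add: atLeastLessThanSuc_atLeastAtMost[symmetric] sum.atLeastLessThan_Suc)
  also have "\<dots> = pc_gamma (Suc m) R j"
    unfolding pc_gamma_def using assms
    by (simp add: atLeastLessThanSuc_atLeastAtMost[symmetric] sum.atLeastLessThan_Suc)
  finally show ?thesis .
qed

lemma pc_density_nonneg: "0 \<le> \<sigma> \<Longrightarrow> 0 \<le> pc_density m R \<mu> \<sigma> x"
  unfolding pc_density_def
  by (auto intro!: prod_nonneg mult_nonneg_nonneg pc_gamma_nonneg f_exp_nonneg
      simp: F_exp_le_one)

lemma pc_density_nonzero_last:
  assumes "pc_density m R \<mu> \<sigma> x \<noteq> 0" "0 < m"
  shows "\<mu> < x m"
proof (rule ccontr)
  assume "\<not> \<mu> < x m"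
  then have "f_exp \<mu> \<sigma> (x m) = 0"
    by (simp add: f_exp_def)
  with assms show False
    unfolding pc_density_def by (auto intro!: prod_zero bexI[of _ m] split: if_splits)
qed

definition pc_spacing :: "nat \<Rightarrow> (nat \<Rightarrow> nat) \<Rightarrow> real \<Rightarrow> real \<Rightarrow> (nat \<Rightarrow> real) \<Rightarrow> nat \<Rightarrow> real" where
  "pc_spacing m R \<mu> \<sigma> x j = pc_gamma m R j * (x j - (if j = 1 then \<mu> else x (j - 1))) / \<sigma>"

lemma measurable_pc_spacing:
  assumes "j \<in> {1..m}"
  shows "(\<lambda>x. pc_spacing m R \<mu> \<sigma> x j) \<in> borel_measurable (PiM {1..m} (\<lambda>_. lborel))"
proof -
  have "(\<lambda>x. if j = 1 then \<mu> else x (j - 1)) \<in> borel_measurable (PiM {1..m} (\<lambda>_. lborel))"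
  proof (cases "j = 1")
    case False
    with assms have "j - 1 \<in> {1..m}" by auto
    with False show ?thesis using measurable_pc_coordinate by simp
  qed simp
  with measurable_pc_coordinate[OF assms] show ?thesis
    unfolding pc_spacing_def
    by (intro borel_measurable_divide borel_measurable_times borel_measurable_diff
        borel_measurable_const)
qed

lemma exp_spacing_density:
  fixes k :: nat
  assumes \<sigma>: "0 < \<sigma>" and "\<mu> \<le> a" "y \<noteq> \<mu>"
  defines "c \<equiv> real (Suc k)"
  shows "(if a \<le> y then c * f_exp \<mu> \<sigma> y * (1 - F_exp \<mu> \<sigma> y) ^ k else 0)
       = exp (- c * (a - \<mu>) / \<sigma>) * (c / \<sigma> * exponential_density 1 (c * (y - a) / \<sigma>))"
proof (cases "a \<le> y")
  case True
  with assms have "\<mu> < y" by auto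
  then have "c * f_exp \<mu> \<sigma> y * (1 - F_exp \<mu> \<sigma> y) ^ k
      = c / \<sigma> * (exp (- (y - \<mu>) / \<sigma>) * exp (- (real k * (y - \<mu>) / \<sigma>)))"
    by (simp add: f_exp_def one_minus_F_exp_power)
  also have "exp (- (y - \<mu>) / \<sigma>) * exp (- (real k * (y - \<mu>) / \<sigma>))
      = exp (- c * (a - \<mu>) / \<sigma>) * exp (- (c * (y - a) / \<sigma>))"
  proof -
    have "- (y - \<mu>) / \<sigma> + - (real k * (y - \<mu>) / \<sigma>) = - c * (a - \<mu>) / \<sigma> + - (c * (y - a) / \<sigma>)"
      using \<sigma> by (simp add: c_def field_simps)
    then show ?thesis
      by (simp only: exp_add[symmetric])
  qed
  moreover have "0 \<le> c * (y - a) / \<sigma>"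
    using True \<sigma> by (simp add: c_def)
  then have "exponential_density 1 (c * (y - a) / \<sigma>) = exp (- (c * (y - a) / \<sigma>))"
    by (simp add: exponential_density_def)
  ultimately show ?thesis
    using True by (simp add: mult_ac)
next
  case False
  then have "c * (y - a) / \<sigma> < 0"
    using \<sigma> by (simp add: c_def divide_neg_pos mult_pos_neg)
  with False show ?thesis
    by (simp add: exponential_density_def)
qed

lemma nn_integral_exp_spacing:
  fixes g :: "real \<Rightarrow> ennreal" and k :: nat
  assumes [measurable]: "g \<in> borel_measurable borel" and \<sigma>: "0 < \<sigma>" and a: "\<mu> \<le> a"
  defines "c \<equiv> real (Suc k)"
  shows "(\<integral>\<^sup>+ y. ennreal (if a \<le> y then c * f_exp \<mu> \<sigma> y * (1 - F_exp \<mu> \<sigma> y) ^ k else 0)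
                * g (c * (y - a) / \<sigma>) \<partial>lborel)
       = ennreal (exp (- c * (a - \<mu>) / \<sigma>)) * (\<integral>\<^sup>+ z. ennreal (exponential_density 1 z) * g z \<partial>lborel)"
proof -
  define h where "h z = ennreal (exponential_density 1 z) * g z" for z
  have [measurable]: "h \<in> borel_measurable borel"
    unfolding h_def by measurable
  have c: "0 < c" by (simp add: c_def)
  have "(\<integral>\<^sup>+ y. ennreal (if a \<le> y then c * f_exp \<mu> \<sigma> y * (1 - F_exp \<mu> \<sigma> y) ^ k else 0)
                * g (c * (y - a) / \<sigma>) \<partial>lborel)
      = (\<integral>\<^sup>+ y. ennreal (exp (- c * (a - \<mu>) / \<sigma>)) * (ennreal (c / \<sigma>) * h (c * (y - a) / \<sigma>)) \<partial>lborel)"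
  proof (rule nn_integral_cong_AE)
    show "AE y in lborel.
        ennreal (if a \<le> y then c * f_exp \<mu> \<sigma> y * (1 - F_exp \<mu> \<sigma> y) ^ k else 0) * g (c * (y - a) / \<sigma>)
      = ennreal (exp (- c * (a - \<mu>) / \<sigma>)) * (ennreal (c / \<sigma>) * h (c * (y - a) / \<sigma>))"
      using AE_lborel_singleton[of \<mu>]
    proof eventually_elim
      case (elim y)
      have nonneg: "0 \<le> c / \<sigma>" "0 \<le> exponential_density 1 (c * (y - a) / \<sigma>)"
        using c \<sigma> by (simp_all add: exponential_density_nonneg)
      have "ennreal (if a \<le> y then c * f_exp \<mu> \<sigma> y * (1 - F_exp \<mu> \<sigma> y) ^ k else 0)
          = ennreal (exp (- c * (a - \<mu>) / \<sigma>))
            * (ennreal (c / \<sigma>) * ennreal (exponential_density 1 (c * (y - a) / \<sigma>)))"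
        unfolding exp_spacing_density[OF \<sigma> a elim, of k, folded c_def]
        by (simp only: ennreal_mult[OF exp_ge_zero mult_nonneg_nonneg[OF nonneg]]
            ennreal_mult[OF nonneg])
      then show ?case
        by (simp add: h_def mult.assoc)
    qed
  qed
  also have "\<dots> = ennreal (exp (- c * (a - \<mu>) / \<sigma>))
      * (ennreal (c / \<sigma>) * (\<integral>\<^sup>+ y. h (c * (y - a) / \<sigma>) \<partial>lborel))"
    by (simp add: nn_integral_cmult)
  also have "(\<integral>\<^sup>+ y. h (c * (y - a) / \<sigma>) \<partial>lborel) = ennreal (\<sigma> / c) * (\<integral>\<^sup>+ z. h z \<partial>lborel)"
  proof -
    have "(\<integral>\<^sup>+ y. h (c * (y - a) / \<sigma>) \<partial>lborel)
        = ennreal \<bar>\<sigma> / c\<bar> * (\<integral>\<^sup>+ z. h (c * ((a + \<sigma> / c * z) - a) / \<sigma>) \<partial>lborel)"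
      by (rule nn_integral_real_affine) (use c \<sigma> in auto)
    also have "(\<lambda>z. h (c * ((a + \<sigma> / c * z) - a) / \<sigma>)) = h"
      using c \<sigma> by (auto simp: fun_eq_iff)
    finally show ?thesis
      using c \<sigma> by simp
  qed
  also have "ennreal (c / \<sigma>) * (ennreal (\<sigma> / c) * (\<integral>\<^sup>+ z. h z \<partial>lborel)) = (\<integral>\<^sup>+ z. h z \<partial>lborel)"
    using c \<sigma> by (simp add: mult.assoc[symmetric] ennreal_mult[symmetric])
  finally show ?thesis
    unfolding h_def .
qed

text \<open>Withdrawing the last observed unit of an (m+1)-stage sample at stage m as well
  (R m becomes R m + R (m+1) + 1) gives the density that remains after integrating out the
  last observation; by memorylessness the two differ only by the survivor factor at x m.\<close>

lemma pc_density_merge_last: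
  fixes x :: "nat \<Rightarrow> real" and m :: nat and R :: "nat \<Rightarrow> nat" and \<mu> \<sigma> :: real
  defines "a \<equiv> (if m = 0 then \<mu> else x m)" and "c \<equiv> real (Suc (R (Suc m)))"
  shows "pc_density m (R(m := R m + R (Suc m) + 1)) \<mu> \<sigma> x * exp (c * (a - \<mu>) / \<sigma>)
       = (if \<forall>j\<in>{1..<m}. x j \<le> x (Suc j)
          then \<Prod>j=1..m. pc_gamma (Suc m) R j * f_exp \<mu> \<sigma> (x j) * (1 - F_exp \<mu> \<sigma> (x j)) ^ R j
          else 0)"
proof (cases m)
  case 0
  then show ?thesis
    by (simp add: pc_density_def a_def)
next
  case (Suc k)
  define R' where "R' = R(m := R m + R (Suc m) + 1)"
  define D where "D j z = pc_gamma (Suc m) R j * f_exp \<mu> \<sigma> z * (1 - F_exp \<mu> \<sigma> z) ^ R j" for j z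
  have gamma: "pc_gamma m R' j = pc_gamma (Suc m) R j" if "j \<in> {1..m}" for j
    using that unfolding R'_def by (intro pc_gamma_merge_last) auto
  then have "(\<Prod>j=1..k. pc_gamma m R' j * f_exp \<mu> \<sigma> (x j) * (1 - F_exp \<mu> \<sigma> (x j)) ^ R' j)
      = (\<Prod>j=1..k. D j (x j))"
    using Suc by (intro prod.cong) (auto simp: D_def R'_def)
  moreover have "pc_gamma m R' m * f_exp \<mu> \<sigma> (x m) * (1 - F_exp \<mu> \<sigma> (x m)) ^ R' m
      * exp (c * (a - \<mu>) / \<sigma>) = D m (x m)"
  proof (cases "\<mu> < x m")
    case True
    have "(1 - F_exp \<mu> \<sigma> (x m)) ^ Suc (R (Suc m)) = exp (- (c * (x m - \<mu>) / \<sigma>))"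
      unfolding c_def using True by (intro one_minus_F_exp_power) simp
    then have "(1 - F_exp \<mu> \<sigma> (x m)) ^ Suc (R (Suc m)) * exp (c * (x m - \<mu>) / \<sigma>) = 1"
      by (simp add: exp_minus field_simps)
    then show ?thesis
      using Suc gamma[of m] by (simp add: D_def R'_def a_def power_add mult_ac)
  qed (simp add: D_def f_exp_def)
  ultimately have "pc_density m R' \<mu> \<sigma> x * exp (c * (a - \<mu>) / \<sigma>)
      = (if \<forall>j\<in>{1..<m}. x j \<le> x (Suc j) then \<Prod>j=1..m. D j (x j) else 0)"
    using Suc by (simp add: pc_density_def mult_ac)
  then show ?thesis
    unfolding R'_def D_def .
qed

lemma pc_density_upd_last:
  fixes x :: "nat \<Rightarrow> real" and m :: nat and R :: "nat \<Rightarrow> nat" and \<mu> \<sigma> y :: real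
  defines "a \<equiv> (if m = 0 then \<mu> else x m)" and "c \<equiv> real (Suc (R (Suc m)))"
  shows "pc_density (Suc m) R \<mu> \<sigma> (x(Suc m := y))
       = pc_density m (R(m := R m + R (Suc m) + 1)) \<mu> \<sigma> x * exp (c * (a - \<mu>) / \<sigma>)
         * (if a \<le> y then c * f_exp \<mu> \<sigma> y * (1 - F_exp \<mu> \<sigma> y) ^ R (Suc m) else 0)"
proof -
  define D where "D j z = pc_gamma (Suc m) R j * f_exp \<mu> \<sigma> z * (1 - F_exp \<mu> \<sigma> z) ^ R j" for j z
  define ord where "ord \<longleftrightarrow> (\<forall>j\<in>{1..<m}. x j \<le> x (Suc j))"
  define B where "B = c * f_exp \<mu> \<sigma> y * (1 - F_exp \<mu> \<sigma> y) ^ R (Suc m)"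
  have ord_upd: "(\<forall>j\<in>{1..<Suc m}. (x(Suc m := y)) j \<le> (x(Suc m := y)) (Suc j))
      \<longleftrightarrow> ord \<and> (0 < m \<longrightarrow> x m \<le> y)"
    unfolding ord_def by (cases m) (auto simp: less_Suc_eq)
  have "(\<Prod>j=1..m. D j ((x(Suc m := y)) j)) = (\<Prod>j=1..m. D j (x j))"
    by (rule prod.cong) auto
  then have "pc_density (Suc m) R \<mu> \<sigma> (x(Suc m := y))
      = (if ord \<and> (0 < m \<longrightarrow> x m \<le> y) then (\<Prod>j=1..m. D j (x j)) * B else 0)"
    unfolding pc_density_def ord_upd by (auto simp: D_def B_def pc_gamma_self c_def)
  also have "\<dots> = (if ord then \<Prod>j=1..m. D j (x j) else 0) * (if a \<le> y then B else 0)"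
    by (cases m) (auto simp: a_def B_def f_exp_def)
  finally show ?thesis
    unfolding pc_density_merge_last[of m R \<mu> \<sigma> x, folded a_def c_def] ord_def D_def B_def .
qed

lemma pc_spacing_upd_last:
  assumes "j \<in> {1..m}"
  shows "pc_spacing (Suc m) R \<mu> \<sigma> (x(Suc m := y)) j
    = pc_spacing m (R(m := R m + R (Suc m) + 1)) \<mu> \<sigma> x j"
proof -
  have "pc_gamma m (R(m := R m + R (Suc m) + 1)) j = pc_gamma (Suc m) R j"
    using assms by (intro pc_gamma_merge_last) auto
  moreover have "j \<noteq> Suc m" "j - 1 \<noteq> Suc m"
    using assms by auto
  ultimately show ?thesis
    by (simp add: pc_spacing_def)
qed

lemma prod_pc_spacing_upd_last:
  "(\<Prod>j\<in>{1..Suc m}. g j (pc_spacing (Suc m) R \<mu> \<sigma> (x(Suc m := y)) j))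
    = (\<Prod>j\<in>{1..m}. g j (pc_spacing m (R(m := R m + R (Suc m) + 1)) \<mu> \<sigma> x j))
      * g (Suc m) (real (Suc (R (Suc m))) * (y - (if m = 0 then \<mu> else x m)) / \<sigma>)"
proof -
  have "(\<Prod>j\<in>{1..m}. g j (pc_spacing (Suc m) R \<mu> \<sigma> (x(Suc m := y)) j))
      = (\<Prod>j\<in>{1..m}. g j (pc_spacing m (R(m := R m + R (Suc m) + 1)) \<mu> \<sigma> x j))"
    by (rule prod.cong) (simp_all add: pc_spacing_upd_last)
  moreover have "{1..Suc m} = insert (Suc m) {1..m}"
    by auto
  ultimately show ?thesis
    by (simp add: pc_spacing_def pc_gamma_self mult.commute)
qed

lemma nn_integral_pc_density_last:
  fixes g :: "nat \<Rightarrow> real \<Rightarrow> ennreal" and m :: nat and R :: "nat \<Rightarrow> nat"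
  assumes \<sigma>: "0 < \<sigma>" and [measurable]: "\<And>j. g j \<in> borel_measurable borel"
  defines "R' \<equiv> R(m := R m + R (Suc m) + 1)"
  shows "(\<integral>\<^sup>+ y. ennreal (pc_density (Suc m) R \<mu> \<sigma> (x(Suc m := y)))
              * (\<Prod>j\<in>{1..Suc m}. g j (pc_spacing (Suc m) R \<mu> \<sigma> (x(Suc m := y)) j)) \<partial>lborel)
       = ennreal (pc_density m R' \<mu> \<sigma> x) * (\<Prod>j\<in>{1..m}. g j (pc_spacing m R' \<mu> \<sigma> x j))
         * (\<integral>\<^sup>+ z. ennreal (exponential_density 1 z) * g (Suc m) z \<partial>lborel)"
proof -
  define a where "a = (if m = 0 then \<mu> else x m)"
  define c where "c = real (Suc (R (Suc m)))"
  define B where "B y = (if a \<le> y then c * f_exp \<mu> \<sigma> y * (1 - F_exp \<mu> \<sigma> y) ^ R (Suc m) else 0)"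
    for y
  define D where "D = pc_density m R' \<mu> \<sigma> x * exp (c * (a - \<mu>) / \<sigma>)"
  define P where "P = (\<Prod>j\<in>{1..m}. g j (pc_spacing m R' \<mu> \<sigma> x j))"
  have B_nonneg: "0 \<le> B y" for y
    unfolding B_def c_def using \<sigma>
    by (auto intro!: mult_nonneg_nonneg f_exp_nonneg simp: F_exp_le_one)
  have D_nonneg: "0 \<le> D"
    unfolding D_def using \<sigma> by (simp add: pc_density_nonneg)
  have "(\<integral>\<^sup>+ y. ennreal (pc_density (Suc m) R \<mu> \<sigma> (x(Suc m := y)))
              * (\<Prod>j\<in>{1..Suc m}. g j (pc_spacing (Suc m) R \<mu> \<sigma> (x(Suc m := y)) j)) \<partial>lborel)
      = (\<integral>\<^sup>+ y. (ennreal D * P) * (ennreal (B y) * g (Suc m) (c * (y - a) / \<sigma>)) \<partial>lborel)"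
  proof (rule nn_integral_cong)
    fix y
    have "(\<Prod>j\<in>{1..Suc m}. g j (pc_spacing (Suc m) R \<mu> \<sigma> (x(Suc m := y)) j))
        = P * g (Suc m) (c * (y - a) / \<sigma>)"
      unfolding P_def R'_def a_def c_def by (rule prod_pc_spacing_upd_last)
    moreover have "pc_density (Suc m) R \<mu> \<sigma> (x(Suc m := y)) = D * B y"
      unfolding D_def B_def a_def c_def R'_def by (rule pc_density_upd_last)
    ultimately show "ennreal (pc_density (Suc m) R \<mu> \<sigma> (x(Suc m := y)))
              * (\<Prod>j\<in>{1..Suc m}. g j (pc_spacing (Suc m) R \<mu> \<sigma> (x(Suc m := y)) j))
        = (ennreal D * P) * (ennreal (B y) * g (Suc m) (c * (y - a) / \<sigma>))"
      by (simp add: ennreal_mult[OF D_nonneg B_nonneg] mult_ac)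
  qed
  also have "\<dots> = (ennreal D * P) * (\<integral>\<^sup>+ y. ennreal (B y) * g (Suc m) (c * (y - a) / \<sigma>) \<partial>lborel)"
    unfolding B_def F_exp_def f_exp_def by (rule nn_integral_cmult) measurable
  also have "\<dots> = ennreal (pc_density m R' \<mu> \<sigma> x) * P
      * (\<integral>\<^sup>+ z. ennreal (exponential_density 1 z) * g (Suc m) z \<partial>lborel)"
  proof (cases "pc_density m R' \<mu> \<sigma> x = 0")
    case False
    then have "\<mu> \<le> a"
      unfolding a_def using pc_density_nonzero_last[of m R' \<mu> \<sigma> x] by auto
    then have "(\<integral>\<^sup>+ y. ennreal (B y) * g (Suc m) (c * (y - a) / \<sigma>) \<partial>lborel)
        = ennreal (exp (- c * (a - \<mu>) / \<sigma>))
          * (\<integral>\<^sup>+ z. ennreal (exponential_density 1 z) * g (Suc m) z \<partial>lborel)"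
      unfolding B_def c_def using \<sigma> by (intro nn_integral_exp_spacing) auto
    moreover have "ennreal D * ennreal (exp (- c * (a - \<mu>) / \<sigma>)) = ennreal (pc_density m R' \<mu> \<sigma> x)"
      using D_nonneg by (simp add: D_def mult.assoc ennreal_mult[symmetric] flip: exp_add)
    ultimately show ?thesis
      by (metis (no_types, lifting) mult.assoc mult.commute)
  qed (simp add: D_def)
  finally show ?thesis
    unfolding P_def .
qed

lemma nn_integral_pc_density_spacings:
  fixes g :: "nat \<Rightarrow> real \<Rightarrow> ennreal"
  assumes \<sigma>: "0 < \<sigma>" and g[measurable]: "\<And>j. g j \<in> borel_measurable borel"
  shows "(\<integral>\<^sup>+ x. ennreal (pc_density m R \<mu> \<sigma> x) * (\<Prod>j\<in>{1..m}. g j (pc_spacing m R \<mu> \<sigma> x j))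
            \<partial>PiM {1..m} (\<lambda>_. lborel))
       = (\<Prod>j\<in>{1..m}. \<integral>\<^sup>+ z. ennreal (exponential_density 1 z) * g j z \<partial>lborel)"
proof (induction m arbitrary: R)
  case 0
  show ?case
    by (simp add: pc_density_def PiM_empty)
next
  case (Suc m)
  interpret product_sigma_finite "\<lambda>_. lborel :: real measure"
    by standard
  define R' where "R' = R(m := R m + R (Suc m) + 1)"
  define E where "E j = (\<integral>\<^sup>+ z. ennreal (exponential_density 1 z) * g j z \<partial>lborel)" for j
  have integrand_measurable:
    "(\<lambda>x. ennreal (pc_density k Q \<mu> \<sigma> x) * (\<Prod>j\<in>{1..k}. g j (pc_spacing k Q \<mu> \<sigma> x j)))
      \<in> borel_measurable (PiM {1..k} (\<lambda>_. lborel))" for k Q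
    by (intro borel_measurable_times_ennreal borel_measurable_prod_ennreal
        measurable_compose[OF _ g] measurable_pc_spacing
        measurable_compose[OF measurable_pc_density measurable_ennreal]) auto
  have ins: "{1..Suc m} = insert (Suc m) {1..m}"
    by auto
  have "(\<integral>\<^sup>+ x. ennreal (pc_density (Suc m) R \<mu> \<sigma> x)
              * (\<Prod>j\<in>{1..Suc m}. g j (pc_spacing (Suc m) R \<mu> \<sigma> x j)) \<partial>PiM {1..Suc m} (\<lambda>_. lborel))
      = (\<integral>\<^sup>+ x. \<integral>\<^sup>+ y. ennreal (pc_density (Suc m) R \<mu> \<sigma> (x(Suc m := y)))
              * (\<Prod>j\<in>{1..Suc m}. g j (pc_spacing (Suc m) R \<mu> \<sigma> (x(Suc m := y)) j)) \<partial>lborel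
            \<partial>PiM {1..m} (\<lambda>_. lborel))"
    using integrand_measurable[of "Suc m" R] unfolding ins
    by (intro product_nn_integral_insert) auto
  also have "\<dots> = (\<integral>\<^sup>+ x. ennreal (pc_density m R' \<mu> \<sigma> x) * (\<Prod>j\<in>{1..m}. g j (pc_spacing m R' \<mu> \<sigma> x j))
            \<partial>PiM {1..m} (\<lambda>_. lborel)) * E (Suc m)"
    unfolding nn_integral_pc_density_last[OF \<sigma> g] R'_def[symmetric] E_def
    by (rule nn_integral_multc) (rule integrand_measurable)
  also have "\<dots> = (\<Prod>j\<in>{1..Suc m}. E j)"
    using Suc.IH[of R'] by (simp add: E_def)
  finally show ?case
    unfolding E_def .
qed

abbreviation std_exponential :: "real measure" where
  "std_exponential \<equiv> density lborel (exponential_density 1)"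

lemma prob_space_std_exponential: "prob_space std_exponential"
  by (rule prob_space_exponential_density) simp

lemma prod_indicator_eq:
  "finite I \<Longrightarrow> (\<Prod>j\<in>I. indicator (A j) (z j) :: ennreal) = (if \<forall>j\<in>I. z j \<in> A j then 1 else 0)"
  by (induction rule: finite_induct) auto

lemma measurable_pc_spacings:
  "(\<lambda>x. \<lambda>j\<in>{1..m}. pc_spacing m R \<mu> \<sigma> x j)
    \<in> measurable (PiM {1..m} (\<lambda>_. lborel)) (PiM {1..m} (\<lambda>_. std_exponential))"
proof -
  have sets_eq: "sets (PiM {1..m} (\<lambda>_. std_exponential)) = sets (PiM {1..m} (\<lambda>_. borel :: real measure))"
    by (intro sets_PiM_cong) auto
  show ?thesis
    unfolding measurable_cong_sets[OF refl sets_eq]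
    by (intro measurable_restrict measurable_pc_spacing) auto
qed

lemma distr_pc_spacings:
  assumes \<sigma>: "0 < \<sigma>"
  shows "distr (pc_sample m R \<mu> \<sigma>) (PiM {1..m} (\<lambda>_. std_exponential))
            (\<lambda>x. \<lambda>j\<in>{1..m}. pc_spacing m R \<mu> \<sigma> x j)
       = PiM {1..m} (\<lambda>_. std_exponential)"
proof -
  interpret product_sigma_finite "\<lambda>_. std_exponential"
    by (metis prob_space_std_exponential prob_space_imp_sigma_finite product_sigma_finite.intro)
  define Z where "Z x = (\<lambda>j\<in>{1..m}. pc_spacing m R \<mu> \<sigma> x j)" for x
  have Z: "Z \<in> measurable (pc_sample m R \<mu> \<sigma>) (PiM {1..m} (\<lambda>_. std_exponential))"
    unfolding pc_sample_def Z_def[abs_def] using measurable_pc_spacings by simp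
  show ?thesis
    unfolding Z_def[symmetric]
  proof (rule PiM_eqI)
    fix A assume A: "\<And>i. i \<in> {1..m} \<Longrightarrow> A i \<in> sets std_exponential"
    define g where "g j = (indicator (if j \<in> {1..m} then A j else {}) :: real \<Rightarrow> ennreal)" for j
    have g: "g j \<in> borel_measurable borel" for j
      unfolding g_def using A by (cases "j \<in> {1..m}") auto
    have PA: "Pi\<^sub>E {1..m} A \<in> sets (PiM {1..m} (\<lambda>_. std_exponential))"
      using A by (intro sets_PiM_I_finite) auto
    have indicator_Z: "indicator (Z -` Pi\<^sub>E {1..m} A \<inter> space (PiM {1..m} (\<lambda>_. lborel))) x
        = (\<Prod>j\<in>{1..m}. g j (pc_spacing m R \<mu> \<sigma> x j))"
      if "x \<in> space (PiM {1..m} (\<lambda>_. lborel :: real measure))" for x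
    proof -
      have "(\<Prod>j\<in>{1..m}. g j (pc_spacing m R \<mu> \<sigma> x j))
          = (\<Prod>j\<in>{1..m}. indicator (A j) (pc_spacing m R \<mu> \<sigma> x j))"
        unfolding g_def by (rule prod.cong) auto
      then show ?thesis
        using that by (simp add: prod_indicator_eq indicator_def PiE_iff Z_def)
    qed
    have "emeasure (distr (pc_sample m R \<mu> \<sigma>) (PiM {1..m} (\<lambda>_. std_exponential)) Z) (Pi\<^sub>E {1..m} A)
        = emeasure (pc_sample m R \<mu> \<sigma>) (Z -` Pi\<^sub>E {1..m} A \<inter> space (PiM {1..m} (\<lambda>_. lborel)))"
      by (subst emeasure_distr[OF Z PA]) (simp add: pc_sample_def)
    also have "\<dots> = (\<integral>\<^sup>+ x. ennreal (pc_density m R \<mu> \<sigma> x)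
          * indicator (Z -` Pi\<^sub>E {1..m} A \<inter> space (PiM {1..m} (\<lambda>_. lborel))) x
          \<partial>PiM {1..m} (\<lambda>_. lborel))"
    proof -
      have "Z -` Pi\<^sub>E {1..m} A \<inter> space (PiM {1..m} (\<lambda>_. lborel)) \<in> sets (PiM {1..m} (\<lambda>_. lborel))"
        unfolding Z_def[abs_def] by (rule measurable_sets[OF measurable_pc_spacings PA])
      then show ?thesis
        unfolding pc_sample_def by (rule emeasure_density[rotated]) measurable
    qed
    also have "\<dots> = (\<integral>\<^sup>+ x. ennreal (pc_density m R \<mu> \<sigma> x) * (\<Prod>j\<in>{1..m}. g j (pc_spacing m R \<mu> \<sigma> x j))
          \<partial>PiM {1..m} (\<lambda>_. lborel))"
      by (rule nn_integral_cong) (simp only: indicator_Z)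
    also have "\<dots> = (\<Prod>j\<in>{1..m}. \<integral>\<^sup>+ z. ennreal (exponential_density 1 z) * g j z \<partial>lborel)"
      by (rule nn_integral_pc_density_spacings[OF \<sigma> g])
    also have "\<dots> = (\<Prod>j\<in>{1..m}. emeasure std_exponential (A j))"
      using A by (intro prod.cong) (auto simp: g_def emeasure_density)
    finally show "emeasure (distr (pc_sample m R \<mu> \<sigma>) (PiM {1..m} (\<lambda>_. std_exponential)) Z)
          (Pi\<^sub>E {1..m} A) = (\<Prod>j\<in>{1..m}. emeasure std_exponential (A j))" .
  qed simp_all
qed

lemma prob_space_pc_sample:
  assumes "0 < \<sigma>"
  shows "prob_space (pc_sample m R \<mu> \<sigma>)"
proof
  interpret P: prob_space "PiM {1..m} (\<lambda>_. std_exponential)"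
    by (rule prob_space_PiM) (simp add: prob_space_std_exponential)
  define Z where "Z x = (\<lambda>j\<in>{1..m}. pc_spacing m R \<mu> \<sigma> x j)" for x
  have Z: "Z \<in> measurable (pc_sample m R \<mu> \<sigma>) (PiM {1..m} (\<lambda>_. std_exponential))"
    unfolding pc_sample_def Z_def[abs_def] using measurable_pc_spacings by simp
  have "emeasure (pc_sample m R \<mu> \<sigma>) (space (pc_sample m R \<mu> \<sigma>))
      = emeasure (distr (pc_sample m R \<mu> \<sigma>) (PiM {1..m} (\<lambda>_. std_exponential)) Z)
          (space (PiM {1..m} (\<lambda>_. std_exponential)))"
    using measurable_space[OF Z] by (subst emeasure_distr[OF Z]) (auto intro!: arg_cong2[where f=emeasure])
  also have "\<dots> = 1"
    unfolding Z_def distr_pc_spacings[OF assms] by (rule P.emeasure_space_1)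
  finally show "emeasure (pc_sample m R \<mu> \<sigma>) (space (pc_sample m R \<mu> \<sigma>)) = 1" .
qed

lemma pc_spacings_iid:
  assumes \<sigma>: "0 < \<sigma>" and m: "0 < m"
  shows "\<forall>j\<in>{1..m}. distributed (pc_sample m R \<mu> \<sigma>) lborel (\<lambda>x. pc_spacing m R \<mu> \<sigma> x j)
            (exponential_density 1)"
    and "prob_space.indep_vars (pc_sample m R \<mu> \<sigma>) (\<lambda>_. borel) (\<lambda>j x. pc_spacing m R \<mu> \<sigma> x j) {1..m}"
proof -
  define P where "P = pc_sample m R \<mu> \<sigma>"
  define Z where "Z j x = pc_spacing m R \<mu> \<sigma> x j" for j x
  interpret P: prob_space P
    unfolding P_def by (rule prob_space_pc_sample[OF \<sigma>])
  interpret E: product_prob_space "\<lambda>_. std_exponential" "{1..m}"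
    by (simp add: product_prob_space_def product_prob_space_axioms_def product_sigma_finite_def
        prob_space_std_exponential prob_space_imp_sigma_finite)
  have Zvec: "(\<lambda>x. \<lambda>j\<in>{1..m}. Z j x) \<in> measurable P (PiM {1..m} (\<lambda>_. std_exponential))"
    unfolding P_def pc_sample_def Z_def using measurable_pc_spacings by simp
  have law: "distr P (PiM {1..m} (\<lambda>_. std_exponential)) (\<lambda>x. \<lambda>j\<in>{1..m}. Z j x)
      = PiM {1..m} (\<lambda>_. std_exponential)"
    unfolding P_def Z_def by (rule distr_pc_spacings[OF \<sigma>])
  have Z_measurable: "Z j \<in> borel_measurable P" if "j \<in> {1..m}" for j
  proof -
    have "(\<lambda>\<omega>. \<omega> j) \<circ> (\<lambda>x. \<lambda>j\<in>{1..m}. Z j x) \<in> measurable P std_exponential"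
      using that by (intro measurable_comp[OF Zvec] measurable_component_singleton)
    then show ?thesis
      using that by (simp add: comp_def cong: measurable_cong_sets)
  qed
  have Z_law: "distr P borel (Z j) = std_exponential" if "j \<in> {1..m}" for j
  proof -
    have "distr P std_exponential (Z j)
        = distr P std_exponential ((\<lambda>\<omega>. \<omega> j) \<circ> (\<lambda>x. \<lambda>j\<in>{1..m}. Z j x))"
      using that by (intro distr_cong) auto
    also have "\<dots> = distr (distr P (PiM {1..m} (\<lambda>_. std_exponential)) (\<lambda>x. \<lambda>j\<in>{1..m}. Z j x))
        std_exponential (\<lambda>\<omega>. \<omega> j)"
      using that by (intro distr_distr[symmetric] Zvec measurable_component_singleton)
    also have "\<dots> = std_exponential"
      unfolding law using E.PiM_component[of j] that by simp
    finally show ?thesis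
      by (metis distr_cong sets_lborel sets_density)
  qed
  show "\<forall>j\<in>{1..m}. distributed (pc_sample m R \<mu> \<sigma>) lborel (\<lambda>x. pc_spacing m R \<mu> \<sigma> x j)
      (exponential_density 1)"
    unfolding distributed_def P_def[symmetric] Z_def[symmetric] using Z_measurable Z_law
    by (auto cong: distr_cong measurable_cong_sets)
  have "P.indep_vars (\<lambda>_. borel) Z {1..m}"
  proof (subst P.indep_vars_iff_distr_eq_PiM')
    have "distr P (PiM {1..m} (\<lambda>_. borel)) (\<lambda>x. restrict (\<lambda>j. Z j x) {1..m})
        = distr P (PiM {1..m} (\<lambda>_. std_exponential)) (\<lambda>x. \<lambda>j\<in>{1..m}. Z j x)"
      by (intro distr_cong sets_PiM_cong) auto
    also have "\<dots> = (\<Pi>\<^sub>M j\<in>{1..m}. distr P borel (Z j))"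
      unfolding law by (intro PiM_cong) (simp_all add: Z_law)
    finally show "distr P (PiM {1..m} (\<lambda>_. borel)) (\<lambda>x. restrict (\<lambda>j. Z j x) {1..m})
        = (\<Pi>\<^sub>M j\<in>{1..m}. distr P borel (Z j))" .
  qed (use m Z_measurable in auto)
  then show "prob_space.indep_vars (pc_sample m R \<mu> \<sigma>) (\<lambda>_. borel) (\<lambda>j x. pc_spacing m R \<mu> \<sigma> x j) {1..m}"
    unfolding P_def Z_def[abs_def] .
qed

section \<open>The pivot (S, T)\<close>

lemma measurable_sigma_hat:
  "sigma_hat m R \<in> borel_measurable (PiM {1..m} (\<lambda>_. lborel))"
proof -
  have "(\<lambda>x. \<Sum>j=2..m. pc_gamma m R j * (x j - x (j - 1)))
      \<in> borel_measurable (PiM {1..m} (\<lambda>_. lborel))"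
  proof (rule borel_measurable_sum)
    fix j assume "j \<in> {2..m}"
    then have [measurable]: "(\<lambda>x. x j :: real) \<in> borel_measurable (PiM {1..m} (\<lambda>_. lborel))"
      "(\<lambda>x. x (j - 1) :: real) \<in> borel_measurable (PiM {1..m} (\<lambda>_. lborel))"
      by (auto intro!: measurable_pc_coordinate simp del: One_nat_def)
    show "(\<lambda>x. pc_gamma m R j * (x j - x (j - 1))) \<in> borel_measurable (PiM {1..m} (\<lambda>_. lborel))"
      by measurable
  qed
  then show ?thesis
    unfolding sigma_hat_def[abs_def] by measurable
qed

definition pc_pivot :: "nat \<Rightarrow> (nat \<Rightarrow> nat) \<Rightarrow> real \<Rightarrow> real \<Rightarrow> (nat \<Rightarrow> real) \<Rightarrow> real \<times> real" where
  "pc_pivot m R \<mu> \<sigma> x = ((mu_hat x - \<mu>) / \<sigma>, sigma_hat m R x / \<sigma>)"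

lemma measurable_pc_pivot:
  assumes "0 < m"
  shows "pc_pivot m R \<mu> \<sigma> \<in> measurable (pc_sample m R \<mu> \<sigma>) (borel \<Otimes>\<^sub>M borel)"
proof -
  have [measurable]: "(\<lambda>x. x 1 :: real) \<in> borel_measurable (PiM {1..m} (\<lambda>_. lborel))"
    using assms by (intro measurable_pc_coordinate) auto
  note measurable_sigma_hat[measurable]
  show ?thesis
    unfolding pc_sample_def pc_pivot_def[abs_def] mu_hat_def by measurable
qed

lemma distr_pc_pivot:
  assumes m: "1 < m" and mn: "m \<le> n" and R: "(\<Sum>j=1..m. R j) = n - m" and \<sigma>: "0 < \<sigma>"
  shows "distr (pc_sample m R \<mu> \<sigma>) (borel \<Otimes>\<^sub>M borel) (pc_pivot m R \<mu> \<sigma>) = ST_law m n"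
proof -
  define P where "P = pc_sample m R \<mu> \<sigma>"
  define Z where "Z j x = pc_spacing m R \<mu> \<sigma> x j" for j x
  interpret P: prob_space P
    unfolding P_def by (rule prob_space_pc_sample[OF \<sigma>])
  have Z_law: "distributed P lborel (Z j) (exponential_density 1)" if "j \<in> {1..m}" for j
    using pc_spacings_iid(1)[OF \<sigma>, of m R \<mu>] that m by (simp add: P_def Z_def[abs_def])
  have Z_indep: "P.indep_vars (\<lambda>_. borel) Z {1..m}"
    using pc_spacings_iid(2)[OF \<sigma>, of m R \<mu>] m by (simp add: P_def Z_def[abs_def])
  define S where "S x = (1 / real n) * Z 1 x" for x
  define T where "T x = (1 / real m) * (\<Sum>j\<in>{2..m}. Z j x)" for x
  have n: "0 < real n"
    using m mn by simp
  have "pc_pivot m R \<mu> \<sigma> x = (S x, T x)" for x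
  proof -
    have "(\<Sum>j\<in>{2..m}. Z j x) = (\<Sum>j=2..m. pc_gamma m R j * (x j - x (j - 1))) / \<sigma>"
      unfolding sum_divide_distrib Z_def pc_spacing_def by (rule sum.cong) auto
    then show ?thesis
      using pc_gamma_one[OF _ mn R] m n
      by (simp add: pc_pivot_def S_def T_def Z_def pc_spacing_def mu_hat_def sigma_hat_def)
  qed
  then have "pc_pivot m R \<mu> \<sigma> = (\<lambda>x. (S x, T x))"
    by auto
  moreover have "distributed P lborel S (exponential_density (real n))"
    using P.erlang_distributed_mult_const[OF Z_law[of 1], of "1 / real n"] m n
    by (simp add: S_def[abs_def])
  moreover have "distributed P lborel T (erlang_density (m - 2) (real m))"
  proof -
    have "distributed P lborel (\<lambda>x. \<Sum>j\<in>{2..m}. Z j x) (erlang_density (card {2..m} - 1) 1)"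
      using m Z_law Z_indep
      by (intro P.exponential_distributed_sum) (auto intro: P.indep_vars_subset)
    from P.erlang_distributed_mult_const[OF this, of "1 / real m"] m
    show ?thesis
      by (simp add: T_def[abs_def] numeral_2_eq_2)
  qed
  moreover have "P.indep_var borel S borel T"
  proof -
    have "{1..m} = insert 1 {2..m}" "1 \<notin> {2..m}"
      using m by auto
    then have "P.indep_var borel (Z 1) borel (\<lambda>\<omega>. \<Sum>j\<in>{2..m}. Z j \<omega>)"
      using Z_indep by (intro P.indep_vars_sum) auto
    from P.indep_var_compose[OF this, of "\<lambda>z. (1 / real n) * z" borel "\<lambda>z. (1 / real m) * z" borel]
    show ?thesis
      by (simp add: S_def[abs_def] T_def[abs_def] comp_def)
  qed
  ultimately show ?thesis
    unfolding P_def[symmetric] ST_law_def P.indep_var_distribution_eq distributed_def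
    by (metis (no_types) distr_cong sets_lborel)
qed

section \<open>The Kolmogorov distance as a function of the pivot\<close>

definition std_gap :: "real \<Rightarrow> real \<Rightarrow> real \<Rightarrow> real" where
  "std_gap s t u = \<bar>F_exp s t u - F_exp 0 1 u\<bar>"

definition std_K :: "real \<Rightarrow> real \<Rightarrow> real" where
  "std_K s t = (SUP u. std_gap s t u)"

definition UV_max :: "real \<Rightarrow> real \<Rightarrow> real" where
  "UV_max s t = max (U_fun s) (V_fun s t)"

lemma K_stat_eq_std_K:
  assumes \<sigma>: "0 < \<sigma>"
  shows "K_stat m R \<mu> \<sigma> x = case_prod std_K (pc_pivot m R \<mu> \<sigma> x)"
proof -
  define h where "h = std_gap ((mu_hat x - \<mu>) / \<sigma>) (sigma_hat m R x / \<sigma>)"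
  have "\<bar>F_exp (mu_hat x) (sigma_hat m R x) t - F_exp \<mu> \<sigma> t\<bar> = h ((t - \<mu>) / \<sigma>)" for t
    unfolding h_def std_gap_def
    using F_exp_affine[OF \<sigma>, of "mu_hat x" "sigma_hat m R x" t \<mu>] F_exp_affine[OF \<sigma>, of \<mu> \<sigma> t \<mu>] \<sigma>
    by simp
  then have "K_stat m R \<mu> \<sigma> x = Sup (h ` range (\<lambda>t. (t - \<mu>) / \<sigma>))"
    unfolding K_stat_def by (simp add: image_image)
  also have "range (\<lambda>t. (t - \<mu>) / \<sigma>) = UNIV"
  proof -
    have "u = (\<mu> + \<sigma> * u - \<mu>) / \<sigma>" for u
      using \<sigma> by simp
    then show ?thesis
      by blast
  qed
  finally show ?thesis
    unfolding std_K_def h_def pc_pivot_def by simp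
qed

lemma exp_convex_comb:
  fixes a x y :: real
  shows "0 \<le> a \<Longrightarrow> a \<le> 1 \<Longrightarrow> exp (a * x + (1 - a) * y) \<le> a * exp x + (1 - a) * exp y"
  using convex_onD[OF exp_convex, of "1 - a" x y] by (simp add: algebra_simps)

lemma std_gap_beyond:
  assumes "0 \<le> s" "0 < t" "y < 0"
  shows "std_gap s t (s - t * y) = \<bar>exp (t * y - s) - exp y\<bar>"
proof -
  have "0 < - (t * y)"
    using assms by (simp add: mult_pos_neg)
  with assms show ?thesis
    by (simp add: std_gap_def F_exp_def)
qed

lemma std_gap_le_U:
  assumes "0 < s" "u \<le> s"
  shows "std_gap s t u \<le> U_fun s"
  using assms by (simp add: std_gap_def F_exp_def U_fun_def)

lemma exp_gap_le_UV_max_lt1: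
  assumes s: "0 < s" and t: "0 < t" "t < 1" and y: "y < 0"
  shows "\<bar>exp (t * y - s) - exp y\<bar> \<le> UV_max s t"
proof -
  define B where "B = (s - t * ln t) / (t - 1)"
  have "ln t < 0"
    using t by simp
  with s have "\<not> s < ln t"
    by simp
  with t have V: "V_fun s t = (1 - t) * exp B"
    by (simp add: V_fun_def B_def)
  have "t * (y - ln t) + (1 - t) * B = t * y - s"
    using t by (simp add: B_def field_simps)
  then have "exp (t * y - s) \<le> t * exp (y - ln t) + (1 - t) * exp B"
    using exp_convex_comb[of t "y - ln t" B] t by simp
  also have "t * exp (y - ln t) = exp y"
    using t by (simp add: exp_diff)
  finally have upper: "exp (t * y - s) - exp y \<le> V_fun s t"
    using V by simp
  have "exp y \<le> exp (t * y)"
    using t y by (simp add: mult_le_cancel_right1 less_imp_le)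
  moreover have "exp (t * y) \<le> 1"
    using t y by (simp add: mult_pos_neg less_imp_le)
  moreover have "exp (t * y - s) = exp (t * y) * exp (- s)"
    by (simp add: exp_diff exp_minus field_simps)
  moreover have "exp (- s) \<le> 1"
    using s by simp
  ultimately have "exp y - exp (t * y - s) \<le> exp (t * y) * (1 - exp (- s))"
    by (simp add: algebra_simps)
  also have "\<dots> \<le> 1 - exp (- s)"
    using \<open>exp (t * y) \<le> 1\<close> \<open>exp (- s) \<le> 1\<close> by (intro mult_left_le_one_le) auto
  finally have lower: "exp y - exp (t * y - s) \<le> U_fun s"
    by (simp add: U_fun_def)
  show ?thesis
    using upper lower by (auto simp: UV_max_def abs_le_iff le_max_iff_disj)
qed

lemma exp_gap_le_UV_max_gt1:
  assumes s: "0 < s" and t: "1 < t" and y: "y < 0"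
  shows "\<bar>exp (t * y - s) - exp y\<bar> \<le> UV_max s t"
proof -
  have "t * y - y < 0"
    using mult_pos_neg[of "t - 1" y] t y by (simp add: algebra_simps)
  then have "exp (t * y - s) \<le> exp y"
    using s by simp
  moreover have "0 \<le> U_fun s"
    using s by (simp add: U_fun_def)
  ultimately have upper: "exp (t * y - s) - exp y \<le> U_fun s"
    by linarith
  have lower: "exp y - exp (t * y - s) \<le> max (U_fun s) (V_fun s t)"
  proof (cases "s < ln t")
    case True
    define B where "B = (s - ln t) / (t - 1)"
    have "(s - t * ln t) / (t - 1) = B - ln t"
      using t by (simp add: B_def field_simps)
    then have "V_fun s t = (t - 1) * exp (B - ln t)"
      unfolding V_fun_def using True t by simp
    also have "\<dots> = (1 - 1 / t) * exp B"
      using t by (simp add: exp_diff field_simps)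
    finally have V: "V_fun s t = (1 - 1 / t) * exp B" .
    have "(1 / t) * (t * y - s + ln t) + (1 - 1 / t) * B = y"
      using t by (simp add: B_def field_simps)
    then have "exp y \<le> (1 / t) * exp (t * y - s + ln t) + (1 - 1 / t) * exp B"
      using exp_convex_comb[of "1 / t" "t * y - s + ln t" B] t by simp
    also have "(1 / t) * exp (t * y - s + ln t) = exp (t * y - s)"
      using t by (simp add: exp_add)
    finally show ?thesis
      using V by simp
  next
    case False
    then have "exp (- s) \<le> exp (- ln t)"
      by simp
    then have e: "exp (- s) \<le> 1 / t"
      using t by (simp add: exp_minus inverse_eq_divide)
    have "t * y \<le> 0"
      using t y by (simp add: mult_pos_neg less_imp_le)
    have "exp y \<le> (1 / t) * exp (t * y) + (1 - 1 / t) * exp 0"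
      using exp_convex_comb[of "1 / t" "t * y" 0] t by simp
    moreover have "exp (t * y - s) = exp (t * y) * exp (- s)"
      by (simp add: exp_diff exp_minus field_simps)
    moreover have "0 \<le> (1 - exp (t * y)) * (1 / t - exp (- s))"
      using e \<open>t * y \<le> 0\<close> by (intro mult_nonneg_nonneg) auto
    ultimately have "exp y - exp (t * y - s) \<le> 1 - exp (- s)"
      by (simp add: algebra_simps)
    then show ?thesis
      by (simp add: U_fun_def)
  qed
  show ?thesis
    using upper lower by (auto simp: UV_max_def abs_le_iff le_max_iff_disj)
qed

lemma std_gap_le_UV_max:
  assumes s: "0 < s" and t: "0 < t" "t \<noteq> 1"
  shows "std_gap s t u \<le> UV_max s t"
proof (cases "u \<le> s")
  case True
  then show ?thesis
    using std_gap_le_U[OF s] by (simp add: UV_max_def le_max_iff_disj)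
next
  case False
  define y where "y = - (u - s) / t"
  have y: "y < 0" "u = s - t * y"
    using False t by (auto simp: y_def divide_neg_pos)
  show ?thesis
  proof (cases "t < 1")
    case True
    then show ?thesis
      using std_gap_beyond[of s t y] exp_gap_le_UV_max_lt1[of s t y] s t y by simp
  next
    case False
    then show ?thesis
      using std_gap_beyond[of s t y] exp_gap_le_UV_max_gt1[of s t y] s t y by simp
  qed
qed

text \<open>V is the gap at the critical point u = (s - t ln t) / (1 - t) of
  u \<mapsto> F_exp 0 1 u - F_exp s t u; it lies beyond s exactly when V \<noteq> 0.\<close>

lemma std_gap_attains_V:
  assumes s: "0 < s" and t: "0 < t" "t \<noteq> 1" and V: "V_fun s t \<noteq> 0"
  shows "\<exists>u. std_gap s t u = V_fun s t"
proof -
  define B where "B = (s - t * ln t) / (t - 1)"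
  define y where "y = B + ln t"
  have cases: "(t < 1 \<and> \<not> s < ln t) \<or> (1 < t \<and> s < ln t)"
  proof -
    have "t < 1 \<or> s < ln t"
      using V by (auto simp: V_fun_def)
    moreover have "t < 1 \<Longrightarrow> ln t < 0"
      using t by simp
    ultimately show ?thesis
      using s t by (smt (verit))
  qed
  then have V_eq: "V_fun s t = \<bar>1 - t\<bar> * exp B"
    by (auto simp: V_fun_def B_def)
  have y_eq: "y = (s - ln t) / (t - 1)"
    using t by (simp add: y_def B_def field_simps)
  have "y < 0"
    using cases unfolding y_eq
  proof
    assume "t < 1 \<and> \<not> s < ln t"
    moreover have "ln t < 0"
      using t calculation by simp
    ultimately show "(s - ln t) / (t - 1) < 0"
      using s by (intro divide_pos_neg) auto
  qed (auto intro: divide_neg_pos)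
  moreover have "t * y - s = B"
    using t by (simp add: y_def B_def field_simps)
  ultimately have "std_gap s t (s - t * y) = \<bar>exp B - t * exp B\<bar>"
    using std_gap_beyond[of s t y] s t by (simp add: y_def exp_add mult.commute)
  also have "\<dots> = \<bar>(1 - t) * exp B\<bar>"
    by (simp add: algebra_simps)
  also have "\<dots> = V_fun s t"
    unfolding V_eq by (simp add: abs_mult)
  finally show ?thesis ..
qed

lemma std_K_eq_UV_max:
  assumes s: "0 < s" and t: "0 < t" "t \<noteq> 1"
  shows "std_K s t = UV_max s t"
proof (rule antisym)
  have bdd: "bdd_above (range (std_gap s t))"
    using std_gap_le_UV_max[OF s t] by (intro bdd_aboveI) auto
  show "std_K s t \<le> UV_max s t"
    unfolding std_K_def by (rule cSUP_least) (auto intro: std_gap_le_UV_max[OF s t])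
  have U: "U_fun s \<le> std_K s t"
  proof -
    have "std_gap s t s = U_fun s"
      using s by (simp add: std_gap_def F_exp_def U_fun_def)
    then show ?thesis
      unfolding std_K_def using cSUP_upper[OF _ bdd, of s] by simp
  qed
  moreover have "V_fun s t \<le> std_K s t"
  proof (cases "V_fun s t = 0")
    case True
    have "0 \<le> U_fun s"
      using s by (simp add: U_fun_def)
    with U True show ?thesis
      by simp
  next
    case False
    then obtain u where "std_gap s t u = V_fun s t"
      using std_gap_attains_V[OF s t] by blast
    then show ?thesis
      unfolding std_K_def using cSUP_upper[OF _ bdd, of u] by simp
  qed
  ultimately show "UV_max s t \<le> std_K s t"
    by (simp add: UV_max_def)
qed

lemma continuous_le_on_Rats:
  fixes f :: "real \<Rightarrow> real"
  assumes "\<And>u. isCont f u" and "\<And>q. q \<in> \<rat> \<Longrightarrow> f q \<le> a"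
  shows "f u \<le> a"
  using continuous_le_on_closure[of \<rat> f u a] assms
  by (simp add: Rats_closure_real continuous_at_imp_continuous_on)

lemma SUP_Rats_eq:
  fixes f :: "real \<Rightarrow> real"
  assumes cont: "\<And>u. isCont f u" and bdd: "bdd_above (range f)"
  shows "(SUP q\<in>\<rat>. f q) = (SUP u. f u)"
proof (rule antisym)
  show "(SUP q\<in>\<rat>. f q) \<le> (SUP u. f u)"
    using bdd Rats_infinite by (intro cSUP_subset_mono) (auto intro: infinite_imp_nonempty)
  have bdd_Rats: "bdd_above (f ` \<rat>)"
    using bdd by (rule bdd_above_mono) auto
  show "(SUP u. f u) \<le> (SUP q\<in>\<rat>. f q)"
  proof (rule cSUP_least)
    show "f u \<le> (SUP q\<in>\<rat>. f q)" for u
      by (rule continuous_le_on_Rats[OF cont]) (rule cSUP_upper[OF _ bdd_Rats])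
  qed simp
qed

lemma Sup_eq_if_not_bdd_above:
  fixes A B :: "real set"
  assumes "\<not> bdd_above A" "\<not> bdd_above B"
  shows "Sup A = Sup B"
proof -
  have "(\<lambda>z. \<forall>x\<in>A. x \<le> z) = (\<lambda>z. \<forall>x\<in>B. x \<le> z)"
    using assms by (auto simp: bdd_above_def fun_eq_iff)
  then show ?thesis
    unfolding Sup_real_def by simp
qed

lemma isCont_std_gap: "isCont (std_gap s t) u"
  unfolding std_gap_def[abs_def] by (intro continuous_intros isCont_F_exp)

lemma std_gap_le_one: "0 \<le> t \<Longrightarrow> std_gap s t u \<le> 1"
  using F_exp_nonneg[of t s u] F_exp_le_one[of s t u] F_exp_nonneg[of 1 0 u] F_exp_le_one[of 0 1 u]
  unfolding std_gap_def by (simp add: abs_le_iff)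

lemma std_gap_not_bdd_above:
  assumes t: "t < 0"
  shows "\<not> bdd_above (range (std_gap s t))"
proof
  assume "bdd_above (range (std_gap s t))"
  then obtain z where z: "\<And>u. std_gap s t u \<le> z"
    by (auto simp: bdd_above_def)
  define u where "u = s - t * ln (\<bar>z\<bar> + 3)"
  have "s < u"
    using t by (simp add: u_def mult_neg_pos)
  moreover have "- (u - s) / t = ln (\<bar>z\<bar> + 3)"
    using t by (simp add: u_def)
  ultimately have "F_exp s t u = - \<bar>z\<bar> - 2"
    by (simp add: F_exp_def)
  then have "\<bar>z\<bar> + 2 \<le> std_gap s t u"
    using F_exp_nonneg[of 1 0 u] F_exp_le_one[of 0 1 u] by (simp add: std_gap_def)
  with z[of u] abs_ge_self[of z] show False
    by linarith
qed

text \<open>For t < 0 the supremum defining std_K is over an unbounded set, so its value is the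
  junk value Sup UNIV; measurability has to account for that case separately.\<close>

lemma std_K_eq_SUP_Rats:
  "std_K s t = (if t < 0 then Sup (UNIV :: real set) else SUP q\<in>\<rat>. min 1 (std_gap s t q))"
proof (cases "t < 0")
  case True
  have "\<not> bdd_above (UNIV :: real set)"
    unfolding bdd_above_def by (metis gt_ex not_le UNIV_I)
  then have "(SUP u. std_gap s t u) = Sup (UNIV :: real set)"
    by (rule Sup_eq_if_not_bdd_above[OF std_gap_not_bdd_above[OF True]])
  with True show ?thesis
    unfolding std_K_def by simp
next
  case False
  then have "min 1 (std_gap s t q) = std_gap s t q" for q
    using std_gap_le_one[of t s q] by simp
  moreover have "(SUP q\<in>\<rat>. std_gap s t q) = std_K s t"
    unfolding std_K_def using std_gap_le_one[of t s] False
    by (intro SUP_Rats_eq isCont_std_gap bdd_aboveI[of _ 1]) auto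
  ultimately show ?thesis
    using False by simp
qed

lemma measurable_std_gap:
  "(\<lambda>p. std_gap (fst p) (snd p) q) \<in> borel_measurable (borel \<Otimes>\<^sub>M borel)"
  unfolding std_gap_def F_exp_def by measurable

lemma measurable_std_K:
  "(\<lambda>p. std_K (fst p) (snd p)) \<in> borel_measurable (borel \<Otimes>\<^sub>M borel)"
  unfolding std_K_eq_SUP_Rats
proof (rule measurable_If)
  show "(\<lambda>p. SUP q\<in>\<rat>. min 1 (std_gap (fst p) (snd p) q)) \<in> borel_measurable (borel \<Otimes>\<^sub>M borel)"
    by (rule borel_measurable_cSUP)
      (auto simp: countable_rat intro: bdd_aboveI[of _ 1] borel_measurable_min measurable_std_gap)
  show "{p \<in> space (borel \<Otimes>\<^sub>M borel). snd p < (0::real)} \<in> sets (borel \<Otimes>\<^sub>M borel)"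
    by (intro borel_measurable_less measurable_snd measurable_const) simp
qed simp

lemma measurable_K_stat:
  assumes "0 < m" "0 < \<sigma>"
  shows "K_stat m R \<mu> \<sigma> \<in> borel_measurable (pc_sample m R \<mu> \<sigma>)"
proof -
  have "K_stat m R \<mu> \<sigma> = (\<lambda>p. std_K (fst p) (snd p)) \<circ> pc_pivot m R \<mu> \<sigma>"
    using assms by (auto simp: K_stat_eq_std_K split_beta)
  then show ?thesis
    using measurable_comp[OF measurable_pc_pivot[OF assms(1)] measurable_std_K] by simp
qed

lemma AE_density_lborel_neq:
  "f \<in> borel_measurable borel \<Longrightarrow> AE x in density lborel f. x \<noteq> c"
  by (subst AE_density) (auto intro: AE_mp[OF AE_lborel_singleton[of c]])

lemma AE_exponential_pos: "AE s in density lborel (exponential_density l). 0 < s"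
proof (subst AE_density)
  show "AE x in lborel. 0 < ennreal (exponential_density l x) \<longrightarrow> 0 < x"
    using AE_lborel_singleton[of 0] by eventually_elim (auto simp: exponential_density_def)
qed measurable

lemma AE_erlang_pos: "AE t in density lborel (erlang_density k l). 0 < t"
proof (subst AE_density)
  show "AE x in lborel. 0 < ennreal (erlang_density k l x) \<longrightarrow> 0 < x"
    using AE_lborel_singleton[of 0] by eventually_elim (auto simp: erlang_density_def)
qed measurable

lemma pair_sigma_finite_ST_law:
  assumes "1 < m" "0 < n"
  shows "pair_sigma_finite (density lborel (exponential_density (real n)))
           (density lborel (erlang_density (m - 2) (real m)))"
  unfolding pair_sigma_finite_def
  using prob_space_exponential_density[of "real n"] prob_space_erlang_density[of "real m" "m - 2"] assms
  by (auto intro: prob_space_imp_sigma_finite)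

lemma sets_ST_law: "sets (ST_law m n) = sets (borel \<Otimes>\<^sub>M borel)"
  unfolding ST_law_def by (intro sets_pair_measure_cong) auto

lemma ST_law_AE:
  assumes "1 < m" "0 < n"
  shows "AE p in ST_law m n. 0 < fst p \<and> 0 < snd p \<and> snd p \<noteq> 1"
proof -
  interpret pair_sigma_finite "density lborel (exponential_density (real n))"
      "density lborel (erlang_density (m - 2) (real m))"
    by (rule pair_sigma_finite_ST_law[OF assms])
  have "AE t in density lborel (erlang_density (m - 2) (real m)). t \<noteq> 1"
    by (rule AE_density_lborel_neq) measurable
  with AE_erlang_pos have "AE t in density lborel (erlang_density (m - 2) (real m)). 0 < t \<and> t \<noteq> 1"
    by eventually_elim auto
  note AE_T = this
  show ?thesis
    unfolding ST_law_def
  proof (rule AE_pair_measure)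
    show "AE s in density lborel (exponential_density (real n)).
        AE t in density lborel (erlang_density (m - 2) (real m)).
          0 < fst (s, t) \<and> 0 < snd (s, t) \<and> snd (s, t) \<noteq> 1"
      using AE_exponential_pos by eventually_elim (use AE_T in auto)
  qed measurable
qed

lemma distr_K_stat:
  assumes m: "1 < m" and mn: "m \<le> n" and R: "(\<Sum>j=1..m. R j) = n - m" and \<sigma>: "0 < \<sigma>"
  shows "distr (pc_sample m R \<mu> \<sigma>) borel (K_stat m R \<mu> \<sigma>) = maxUV_law m n"
proof -
  define K where "K p = std_K (fst p) (snd p)" for p
  have K: "K \<in> borel_measurable (borel \<Otimes>\<^sub>M borel)"
    unfolding K_def[abs_def] by (rule measurable_std_K)
  have "distr (pc_sample m R \<mu> \<sigma>) borel (K_stat m R \<mu> \<sigma>)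
      = distr (pc_sample m R \<mu> \<sigma>) borel (K \<circ> pc_pivot m R \<mu> \<sigma>)"
    by (rule distr_cong) (auto simp: K_stat_eq_std_K[OF \<sigma>] K_def split_beta)
  also have "\<dots> = distr (distr (pc_sample m R \<mu> \<sigma>) (borel \<Otimes>\<^sub>M borel) (pc_pivot m R \<mu> \<sigma>)) borel K"
    using m by (intro distr_distr[symmetric] K measurable_pc_pivot) auto
  also have "\<dots> = distr (ST_law m n) borel K"
    unfolding distr_pc_pivot[OF m mn R \<sigma>] ..
  also have "\<dots> = distr (ST_law m n) borel (case_prod UV_max)"
  proof (rule distr_cong_AE)
    show "AE p in ST_law m n. K p = case_prod UV_max p"
    proof -
      have "0 < n"
        using m mn by simp
      from ST_law_AE[OF m this] show ?thesis
        by eventually_elim (auto simp: K_def std_K_eq_UV_max)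
    qed
    show "K \<in> borel_measurable (ST_law m n)"
      unfolding measurable_cong_sets[OF sets_ST_law refl] by (rule K)
    show "case_prod UV_max \<in> borel_measurable (ST_law m n)"
      unfolding measurable_cong_sets[OF sets_ST_law refl] UV_max_def U_fun_def V_fun_def of_bool_def
      by measurable
  qed simp_all
  also have "\<dots> = maxUV_law m n"
    unfolding maxUV_law_def UV_max_def by (simp add: case_prod_beta')
  finally show ?thesis .
qed

section \<open>The confidence band\<close>

lemma UV_max_eq_cases:
  assumes s: "0 < s" and t: "0 < t" and c: "UV_max s t = c"
  shows "s = - ln (1 - c) \<or> s = (t - 1) * ln (c / \<bar>1 - t\<bar>) + t * ln t"
proof (cases "V_fun s t \<le> U_fun s")
  case True
  then have "exp (- s) = 1 - c"
    using c by (simp add: UV_max_def U_fun_def)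
  then show ?thesis
    by (metis ln_exp minus_minus)
next
  case False
  then have V: "V_fun s t = c"
    using c by (simp add: UV_max_def)
  have "0 < U_fun s"
    using s by (simp add: U_fun_def)
  with False V have "0 < c"
    by simp
  have "(t < 1 \<and> \<not> s < ln t) \<or> (\<not> t < 1 \<and> s < ln t)"
  proof -
    have "t < 1 \<or> s < ln t"
      using V \<open>0 < c\<close> by (cases "t < 1"; cases "s < ln t") (auto simp: V_fun_def)
    moreover have "t < 1 \<Longrightarrow> ln t \<le> 0"
      using t by simp
    ultimately show ?thesis
      using s by auto
  qed
  then have eq: "\<bar>1 - t\<bar> * exp ((s - t * ln t) / (t - 1)) = c"
    using V by (auto simp: V_fun_def)
  then have "t \<noteq> 1"
    using \<open>0 < c\<close> by auto
  then have "exp ((s - t * ln t) / (t - 1)) = c / \<bar>1 - t\<bar>"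
    using eq by (simp add: field_simps)
  then have "(s - t * ln t) / (t - 1) = ln (c / \<bar>1 - t\<bar>)"
    by (metis ln_exp)
  then show ?thesis
    using \<open>t \<noteq> 1\<close> by (simp add: field_simps)
qed

lemma maxUV_law_no_atom:
  assumes m: "1 < m" and n: "0 < n"
  shows "measure (maxUV_law m n) {c} = 0"
proof -
  define M1 where "M1 = density lborel (exponential_density (real n))"
  define M2 where "M2 = density lborel (erlang_density (m - 2) (real m))"
  interpret pair_sigma_finite M1 M2
    unfolding M1_def M2_def by (rule pair_sigma_finite_ST_law[OF assms])
  have sets: "sets (M1 \<Otimes>\<^sub>M M2) = sets (borel \<Otimes>\<^sub>M borel)"
    using sets_ST_law by (simp add: ST_law_def M1_def M2_def)
  have G: "case_prod UV_max \<in> borel_measurable (M1 \<Otimes>\<^sub>M M2)"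
    unfolding measurable_cong_sets[OF sets refl] UV_max_def U_fun_def V_fun_def of_bool_def
    by measurable
  have "AE s in M1. UV_max s t \<noteq> c" if "0 < t" for t
  proof -
    have "AE s in M1. s \<noteq> - ln (1 - c)" "AE s in M1. s \<noteq> (t - 1) * ln (c / \<bar>1 - t\<bar>) + t * ln t"
      unfolding M1_def by (rule AE_density_lborel_neq, measurable)+
    moreover have "AE s in M1. 0 < s"
      unfolding M1_def by (rule AE_exponential_pos)
    ultimately show ?thesis
      by eventually_elim (use UV_max_eq_cases that in blast)
  qed
  with AE_erlang_pos[of "m - 2" "real m"] have "AE t in M2. AE s in M1. UV_max s t \<noteq> c"
    unfolding M2_def by (auto elim: AE_mp)
  then have "AE p in M1 \<Otimes>\<^sub>M M2. case_prod UV_max p \<noteq> c"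
    using AE_commute[of "\<lambda>s t. UV_max s t \<noteq> c"] G
    by (auto intro!: AE_pair_measure simp: split_beta)
  then have "emeasure (M1 \<Otimes>\<^sub>M M2) (case_prod UV_max -` {c} \<inter> space (M1 \<Otimes>\<^sub>M M2)) = 0"
    using G by (subst AE_iff_measurable[symmetric]) (auto intro: measurable_sets)
  moreover have "maxUV_law m n = distr (M1 \<Otimes>\<^sub>M M2) borel (case_prod UV_max)"
    unfolding maxUV_law_def ST_law_def M1_def M2_def UV_max_def by (simp add: case_prod_beta')
  ultimately show ?thesis
    unfolding measure_def using G by (simp add: emeasure_distr)
qed

lemma cdf_quantile_eq:
  assumes M: "real_distribution M" and no_atom: "\<And>x. measure M {x} = 0" and q: "0 < q" "q < 1"
  shows "cdf M (quantile M q) = q"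
proof -
  interpret real_distribution M by (rule M)
  define S where "S = {d. q \<le> cdf M d}"
  have cont: "continuous_on UNIV (cdf M)"
    using no_atom by (simp add: isCont_cdf continuous_at_imp_continuous_on)
  obtain a where a: "cdf M a < q"
    using order_tendstoD(2)[OF cdf_lim_at_bot q(1)] by (auto simp: eventually_at_bot_linorder)
  obtain b where b: "q < cdf M b"
    using order_tendstoD(1)[OF cdf_lim_at_top_prob q(2)] by (auto simp: eventually_at_top_linorder)
  have a_below: "a \<le> d" if "d \<in> S" for d
    using that a cdf_nondecreasing[of d a] unfolding S_def by force
  then have "a \<le> b"
    using b by (simp add: S_def)
  then obtain x where x: "cdf M x = q"
    using IVT'[of "cdf M" a q b] a b cont by (auto intro: continuous_on_subset)
  have bdd: "bdd_below S"
    using a_below by (rule bdd_belowI)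
  have "closed S"
    unfolding S_def by (intro closed_Collect_le continuous_on_const cont)
  moreover have "S \<noteq> {}"
    using x by (auto simp: S_def)
  ultimately have "Inf S \<in> S"
    using bdd by (intro closed_contains_Inf)
  moreover have "cdf M (Inf S) \<le> q"
    using x cdf_nondecreasing[of "Inf S" x] cInf_lower[of x S] bdd by (simp add: S_def)
  ultimately show ?thesis
    unfolding quantile_def S_def[symmetric] by (simp add: S_def)
qed

lemma fgraph_subset_band4_iff:
  "fgraph F \<subseteq> band4 m R d x \<longleftrightarrow> (\<forall>t. \<bar>F_exp (mu_hat x) (sigma_hat m R x) t - F t\<bar> \<le> d)"
  unfolding fgraph_def band4_def by auto

lemma is_interval_band4_section: "is_interval {y. (t, y) \<in> band4 m R d x}"
proof -
  have "{y. (t, y) \<in> band4 m R d x}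
      = {F_exp (mu_hat x) (sigma_hat m R x) t - d .. F_exp (mu_hat x) (sigma_hat m R x) t + d}"
    unfolding band4_def by (auto simp: abs_le_iff)
  then show ?thesis
    by (simp add: is_interval_cc)
qed

lemma all_le_iff_all_Rats_le:
  fixes g :: "real \<Rightarrow> real"
  assumes "\<And>t. isCont g t"
  shows "(\<forall>t. g t \<le> d) \<longleftrightarrow> (\<forall>r::rat. g (of_rat r) \<le> d)"
proof (intro iffI allI)
  fix t assume "\<forall>r::rat. g (of_rat r) \<le> d"
  then have "g q \<le> d" if "q \<in> \<rat>" for q
    using that by (auto simp: Rats_def)
  then show "g t \<le> d"
    by (rule continuous_le_on_Rats[OF assms])
qed auto

lemma sets_fgraph_subset_band4:
  assumes "0 < m"
  shows "{x \<in> space (pc_sample m R \<mu>' \<sigma>'). fgraph (F_exp \<mu> \<sigma>) \<subseteq> band4 m R d x}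
    \<in> sets (pc_sample m R \<mu>' \<sigma>')"
proof -
  have [measurable]: "(\<lambda>x. x 1 :: real) \<in> borel_measurable (pc_sample m R \<mu>' \<sigma>')"
    using assms unfolding pc_sample_def by (simp add: measurable_pc_coordinate)
  have [measurable]: "sigma_hat m R \<in> borel_measurable (pc_sample m R \<mu>' \<sigma>')"
    unfolding pc_sample_def using measurable_sigma_hat by simp
  have "fgraph (F_exp \<mu> \<sigma>) \<subseteq> band4 m R d x
      \<longleftrightarrow> (\<forall>r::rat. \<bar>F_exp (x 1) (sigma_hat m R x) (of_rat r) - F_exp \<mu> \<sigma> (of_rat r)\<bar> \<le> d)" for x
  proof -
    have "isCont (\<lambda>t. \<bar>F_exp (x 1) (sigma_hat m R x) t - F_exp \<mu> \<sigma> t\<bar>) t" for t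
      by (intro continuous_intros isCont_F_exp)
    then show ?thesis
      unfolding fgraph_subset_band4_iff mu_hat_def by (rule all_le_iff_all_Rats_le)
  qed
  moreover have "Measurable.pred (pc_sample m R \<mu>' \<sigma>')
      (\<lambda>x. \<forall>r::rat. \<bar>F_exp (x 1) (sigma_hat m R x) (of_rat r) - F_exp \<mu> \<sigma> (of_rat r)\<bar> \<le> d)"
    unfolding F_exp_def by measurable
  ultimately show ?thesis
    unfolding pred_def by simp
qed

lemma fgraph_subset_band4_iff_K_stat_le:
  assumes "0 < \<sigma>" "0 \<le> sigma_hat m R x"
  shows "fgraph (F_exp \<mu> \<sigma>) \<subseteq> band4 m R d x \<longleftrightarrow> K_stat m R \<mu> \<sigma> x \<le> d"
proof -
  have "\<bar>F_exp (mu_hat x) (sigma_hat m R x) t - F_exp \<mu> \<sigma> t\<bar> \<le> 1" for t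
    using F_exp_nonneg[OF assms(2), of "mu_hat x" t] F_exp_le_one[of "mu_hat x" "sigma_hat m R x" t]
      F_exp_nonneg[of \<sigma> \<mu> t] F_exp_le_one[of \<mu> \<sigma> t] assms(1)
    by (simp add: abs_le_iff)
  then have "bdd_above (range (\<lambda>t. \<bar>F_exp (mu_hat x) (sigma_hat m R x) t - F_exp \<mu> \<sigma> t\<bar>))"
    by (intro bdd_aboveI[of _ 1]) auto
  then show ?thesis
    unfolding fgraph_subset_band4_iff K_stat_def by (simp add: cSUP_le_iff)
qed

lemma AE_sigma_hat_pos:
  assumes m: "1 < m" and mn: "m \<le> n" and R: "(\<Sum>j=1..m. R j) = n - m" and \<sigma>: "0 < \<sigma>"
  shows "AE x in pc_sample m R \<mu> \<sigma>. 0 < sigma_hat m R x"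
proof -
  have "AE p in distr (pc_sample m R \<mu> \<sigma>) (borel \<Otimes>\<^sub>M borel) (pc_pivot m R \<mu> \<sigma>). 0 < snd p"
    unfolding distr_pc_pivot[OF m mn R \<sigma>] using ST_law_AE[OF m] m mn by (auto elim: AE_mp)
  from AE_distrD[OF measurable_pc_pivot this] m
  have "AE x in pc_sample m R \<mu> \<sigma>. 0 < sigma_hat m R x / \<sigma>"
    by (simp add: pc_pivot_def)
  then show ?thesis
    by eventually_elim (use \<sigma> in \<open>simp add: zero_less_divide_iff\<close>)
qed

lemma measure_fgraph_subset_band4:
  assumes m: "1 < m" and mn: "m \<le> n" and R: "(\<Sum>j=1..m. R j) = n - m" and \<sigma>: "0 < \<sigma>"
  shows "measure (pc_sample m R \<mu> \<sigma>)
      {x \<in> space (pc_sample m R \<mu> \<sigma>). fgraph (F_exp \<mu> \<sigma>) \<subseteq> band4 m R d x}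
    = cdf (maxUV_law m n) d"
proof -
  define P where "P = pc_sample m R \<mu> \<sigma>"
  have K: "K_stat m R \<mu> \<sigma> \<in> borel_measurable P"
    unfolding P_def using m \<sigma> by (intro measurable_K_stat) auto
  have "measure P {x \<in> space P. fgraph (F_exp \<mu> \<sigma>) \<subseteq> band4 m R d x}
      = measure P {x \<in> space P. K_stat m R \<mu> \<sigma> x \<le> d}"
  proof (rule measure_eq_AE)
    show "AE x in P. x \<in> {x \<in> space P. fgraph (F_exp \<mu> \<sigma>) \<subseteq> band4 m R d x}
        \<longleftrightarrow> x \<in> {x \<in> space P. K_stat m R \<mu> \<sigma> x \<le> d}"
      using AE_sigma_hat_pos[OF m mn R \<sigma>] unfolding P_def
      by eventually_elim (use \<sigma> in \<open>auto simp: fgraph_subset_band4_iff_K_stat_le\<close>)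
    show "{x \<in> space P. fgraph (F_exp \<mu> \<sigma>) \<subseteq> band4 m R d x} \<in> sets P"
      unfolding P_def using m by (intro sets_fgraph_subset_band4) auto
  qed (use K in auto)
  also have "\<dots> = measure (distr P borel (K_stat m R \<mu> \<sigma>)) {..d}"
    by (subst measure_distr[OF K]) (auto intro!: arg_cong[where f="measure P"])
  finally show ?thesis
    unfolding P_def distr_K_stat[OF m mn R \<sigma>] by (simp add: cdf_def)
qed

lemma exact_conf_band_band4:
  assumes m: "1 < m" and mn: "m \<le> n" and R: "(\<Sum>j=1..m. R j) = n - m" and p: "0 < p" "p < 1"
  shows "exact_conf_band (pc_sample m R) F_exp
           (band4 m R (quantile (distr (pc_sample m R 0 1) borel (K_stat m R 0 1)) (1 - p)))
           (1 - p)"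
proof -
  define d where "d = quantile (distr (pc_sample m R 0 1) borel (K_stat m R 0 1)) (1 - p)"
  have law: "distr (pc_sample m R 0 1) borel (K_stat m R 0 1) = maxUV_law m n"
    by (rule distr_K_stat[OF m mn R]) simp
  have "real_distribution (maxUV_law m n)"
  proof -
    interpret prob_space "pc_sample m R 0 1"
      by (rule prob_space_pc_sample) simp
    show ?thesis
      unfolding law[symmetric] using m by (intro real_distribution_distr measurable_K_stat) auto
  qed
  then have "cdf (maxUV_law m n) d = 1 - p"
    unfolding d_def law using maxUV_law_no_atom[OF m] m mn p by (intro cdf_quantile_eq) auto
  then show ?thesis
    unfolding exact_conf_band_def d_def[symmetric] using m
    by (simp add: sets_fgraph_subset_band4 is_interval_band4_section
        measure_fgraph_subset_band4[OF m mn R])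
qed

theorem theorem3:
  fixes m n :: nat and R :: "nat \<Rightarrow> nat" and p :: real
  assumes "1 < m" and "m \<le> n" and "(\<Sum>j=1..m. R j) = n - m"
  shows "(\<forall>\<mu> \<sigma> \<mu>' \<sigma>'. \<sigma> > 0 \<longrightarrow> \<sigma>' > 0 \<longrightarrow>
            distr (pc_sample m R \<mu> \<sigma>) borel (K_stat m R \<mu> \<sigma>) =
            distr (pc_sample m R \<mu>' \<sigma>') borel (K_stat m R \<mu>' \<sigma>'))
       \<and> (\<forall>\<mu> \<sigma>. \<sigma> > 0 \<longrightarrow>
            distr (pc_sample m R \<mu> \<sigma>) borel (K_stat m R \<mu> \<sigma>) = maxUV_law m n)
       \<and> (0 < p \<longrightarrow> p < 1 \<longrightarrow>
            exact_conf_band (pc_sample m R) F_exp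
              (band4 m R (quantile (distr (pc_sample m R 0 1) borel (K_stat m R 0 1)) (1 - p)))
              (1 - p))"
  using distr_K_stat[OF assms] exact_conf_band_band4[OF assms] by auto

end
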